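(* Let $\mathbb{A}=(a_{ij})\in\mathbb{R}^{n\times n}$ satisfy $a_{ij}\ge0$ for $i\ne j$ and $a_{jj}=-\sum_{i\ne j}a_{ij}$ for each $j$ (so every column sums to zero). Let $0<\alpha\le1$ and $t\ge0$. Then the matrix $$E_\alpha(\mathbb{A}t^\alpha)=\sum_{k=0}^\infty\frac{t^{\alpha k}\mathbb{A}^k}{\Gamma(\alpha k+1)}$$ is a (column) stochastic matrix: all its entries are nonnegative and each of its columns sums to $1$. *)

theory Defs
  imports "HOL-Analysis.Analysis"
begin

text \<open>Matrix power with respect to matrix multiplication (the operator ^ on vec is componentwise).\<close>
fun matpow :: "real ^ 'n ^ 'n \<Rightarrow> nat \<Rightarrow> real ^ 'n ^ 'n" where
  "matpow A 0 = mat 1"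
| "matpow A (Suc k) = A ** matpow A k"

text \<open>The k-th term  t^(alpha k) A^k / Gamma(alpha k + 1)  of the matrix Mittag-Leffler series
  E_alpha(A t^alpha); t^(alpha k) is written (t powr alpha)^k so that 0^0 = 1.\<close>
definition mittag_term :: "real \<Rightarrow> real ^ 'n ^ 'n \<Rightarrow> real \<Rightarrow> nat \<Rightarrow> real ^ 'n ^ 'n" where
  "mittag_term \<alpha> A t k = ((t powr \<alpha>) ^ k / Gamma (\<alpha> * real k + 1)) *\<^sub>R matpow A k"

definition mittag_leffler_mat :: "real \<Rightarrow> real ^ 'n ^ 'n \<Rightarrow> real \<Rightarrow> real ^ 'n ^ 'n" where
  "mittag_leffler_mat \<alpha> A t = (\<Sum>k. mittag_term \<alpha> A t k)"

end

theory Submission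
  imports Defs
begin

text \<open>
  Let w(a, n) be the coefficient of z^n in (1 - z) powr (- a) and u = (t / N) powr \<alpha>. The matrix
  Y_N = \<Sum>k\<le>N. u^k w(1 + \<alpha> k, N - k) A^k is the N-th step of the implicit Grunwald-Letnikov
  scheme with step t / N for the fractional equation D^\<alpha> Y = A Y, and comparing generating
  functions gives \<Sum>j\<le>n. w(-\<alpha>, j) Y_(n-j) = w(1 - \<alpha>, n) I + u A Y_(n-1).
  Since w(-\<alpha>, 0) = 1, w(-\<alpha>, 1) = -\<alpha> and w(-\<alpha>, j) \<le> 0 for j \<ge> 2, this expresses Y_n as
  (u A + \<alpha> I) Y_(n-1) plus nonnegative combinations of I and the earlier Y_j. For large N the
  matrix u A + \<alpha> I is nonnegative because A is a Metzler matrix, hence so is every Y_N.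
  As w(1 + x, n) ~ n^x / \<Gamma>(1 + x), Tannery's theorem shows that Y_N converges entrywise to
  E_\<alpha>(A t^\<alpha>), which is therefore nonnegative. Its column sums are 1 because every power A^k
  with k \<ge> 1 inherits the zero column sums of A.
\<close>

text \<open>The coefficient of z^n in (1 - z) powr (- a).\<close>

definition negbinom :: "real \<Rightarrow> nat \<Rightarrow> real" where
  "negbinom a n = pochhammer a n / fact n"

lemma negbinom_0 [simp]: "negbinom a 0 = 1"
  by (simp add: negbinom_def)

lemma negbinom_Suc: "negbinom a (Suc n) = negbinom a n * ((a + real n) / real (Suc n))"
  by (simp add: negbinom_def pochhammer_Suc field_simps)

lemma negbinom_1 [simp]: "negbinom a (Suc 0) = a"
  by (simp add: negbinom_def)

lemma negbinom_nonneg: "0 \<le> a \<Longrightarrow> 0 \<le> negbinom a n"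
  by (induction n) (simp_all add: negbinom_Suc)

lemma negbinom_neg_nonpos:
  assumes "0 \<le> \<alpha>" "\<alpha> \<le> 1" "1 \<le> n"
  shows "negbinom (- \<alpha>) n \<le> 0"
proof -
  obtain m where n: "n = Suc m" using assms(3) by (cases n) auto
  have "negbinom (- \<alpha>) n = - \<alpha> * (negbinom (1 - \<alpha>) m / real n)"
    by (simp add: negbinom_def n pochhammer_rec)
  moreover have "0 \<le> negbinom (1 - \<alpha>) m" using assms by (simp add: negbinom_nonneg)
  ultimately show ?thesis using assms by (simp add: mult_nonpos_nonneg)
qed

lemma negbinom_convolution:
  "(\<Sum>i\<le>n. negbinom a i * negbinom b (n - i)) = negbinom (a + b) n"
proof -
  have "negbinom a i * negbinom b (n - i)
      = real (n choose i) * pochhammer a i * pochhammer b (n - i) / fact n" if "i \<le> n" for i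
  proof -
    have "fact n = real (n choose i) * (fact i * fact (n - i))"
      using binomial_fact_lemma[OF that] by (metis of_nat_fact of_nat_mult mult.commute)
    then show ?thesis using that by (simp add: negbinom_def)
  qed
  then show ?thesis
    by (simp add: negbinom_def pochhammer_binomial_sum sum_divide_distrib)
qed

lemma negbinom_mono:
  assumes "1 \<le> a"
  shows "mono (negbinom a)"
proof (rule incseq_SucI)
  fix n
  have "1 \<le> (a + real n) / real (Suc n)" using assms by (simp add: field_simps)
  then show "negbinom a n \<le> negbinom a (Suc n)"
    using mult_left_mono[OF _ negbinom_nonneg[of a n]] assms
    by (metis negbinom_Suc mult.right_neutral zero_le_one order_trans)
qed

lemma negbinom_le_power:
  assumes "1 \<le> a"
  shows "negbinom a n \<le> a ^ n"
proof (induction n)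
  case (Suc n)
  have "(a + real n) / real (Suc n) \<le> a"
    using assms mult_left_mono[of 1 a "real n"] by (simp add: field_simps)
  with Suc negbinom_nonneg[of a n] assms show ?case
    unfolding negbinom_Suc power_Suc2 by (intro mult_mono) auto
qed simp

lemma negbinom_ratio_le_powr:
  assumes "1 \<le> a" "1 \<le> n"
  shows "(a + real n) / real (Suc n) \<le> (real (Suc n) / real n) powr (a - 1)"
proof -
  have n: "0 < real n" using assms by simp
  have "1 / real (Suc n) \<le> ln (real (Suc n) / real n)"
    using ln_le_minus_one[of "real n / real (Suc n)"] n by (simp add: ln_div field_simps)
  then have ln_bound: "(a - 1) / real (Suc n) \<le> (a - 1) * ln (real (Suc n) / real n)"
    using mult_left_mono[of _ _ "a - 1"] assms by (simp add: divide_inverse)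
  have "(a + real n) / real (Suc n) = 1 + (a - 1) / real (Suc n)"
    by (simp add: field_simps)
  also have "\<dots> \<le> exp ((a - 1) / real (Suc n))"
    by (rule exp_ge_add_one_self)
  also have "\<dots> \<le> exp ((a - 1) * ln (real (Suc n) / real n))"
    using ln_bound by simp
  also have "\<dots> = (real (Suc n) / real n) powr (a - 1)"
    using n by (simp add: powr_def mult.commute)
  finally show ?thesis .
qed

lemma negbinom_growth:
  assumes "1 \<le> a" "1 \<le> m" "m \<le> n"
  shows "negbinom a n \<le> negbinom a m * (real n / real m) powr (a - 1)"
  using assms(3)
proof (induction n rule: dec_induct)
  case (step n)
  have n: "1 \<le> n" using assms step by simp
  have "negbinom a (Suc n) = negbinom a n * ((a + real n) / real (Suc n))"
    by (rule negbinom_Suc)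
  also have "\<dots> \<le> negbinom a m * (real n / real m) powr (a - 1)
                  * (real (Suc n) / real n) powr (a - 1)"
    using step.IH negbinom_ratio_le_powr[OF assms(1) n] assms negbinom_nonneg[of a n]
    by (intro mult_mono) auto
  also have "\<dots> = negbinom a m * (real (Suc n) / real m) powr (a - 1)"
    using n by (simp add: powr_mult[symmetric])
  finally show ?case .
qed (use assms in simp)

lemma negbinom_asymptotics:
  assumes "0 < a"
  shows "(\<lambda>n. negbinom a n / real n powr (a - 1)) \<longlonglongrightarrow> inverse (Gamma a)"
proof -
  have "eventually (\<lambda>n. rGamma_series a n * (real n / (a + real n))
               = negbinom a n / real n powr (a - 1)) sequentially"
    using eventually_gt_at_top[of 0]
  proof eventually_elim
    case (elim n)
    have "exp (a * ln (real n)) = real n powr a"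
      using elim by (simp add: powr_def mult.commute)
    also have "\<dots> = real n * real n powr (a - 1)"
      using elim by (simp add: powr_diff)
    finally have "rGamma_series a n = negbinom a n * (a + real n) / (real n * real n powr (a - 1))"
      by (simp add: rGamma_series_def negbinom_def pochhammer_Suc)
    moreover have "a + real n \<noteq> 0" "real n powr (a - 1) \<noteq> 0" using elim assms by auto
    ultimately show ?case
      using elim by (simp add: field_simps)
  qed
  moreover have "(\<lambda>n. rGamma_series a n * (real n / (a + real n))) \<longlonglongrightarrow> rGamma a * 1"
  proof (intro tendsto_mult rGamma_series_LIMSEQ)
    have "(\<lambda>n. inverse (1 + a * inverse (real n))) \<longlonglongrightarrow> inverse (1 + a * 0)"
      by (intro tendsto_intros lim_inverse_n) auto
    moreover have "eventually (\<lambda>n. inverse (1 + a * inverse (real n)) = real n / (a + real n))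
                     sequentially"
      using eventually_gt_at_top[of 0] by eventually_elim (simp add: field_simps)
    ultimately show "(\<lambda>n. real n / (a + real n)) \<longlonglongrightarrow> 1"
      by (simp add: tendsto_cong)
  qed
  ultimately show ?thesis by (simp add: tendsto_cong rGamma_inverse_Gamma)
qed

lemma negbinom_shifted_asymptotics:
  assumes "0 < a"
  shows "(\<lambda>n. negbinom a (n - k) / real n powr (a - 1)) \<longlonglongrightarrow> inverse (Gamma a)"
proof -
  have "(\<lambda>n. negbinom a (n - k) / real (n - k) powr (a - 1)
              * (1 - real k * inverse (real n)) powr (a - 1))
          \<longlonglongrightarrow> inverse (Gamma a) * (1 - real k * 0) powr (a - 1)"
    by (intro tendsto_intros filterlim_compose[OF negbinom_asymptotics[OF assms]]
          filterlim_minus_const_nat_at_top lim_inverse_n) auto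
  moreover have "eventually (\<lambda>n. negbinom a (n - k) / real (n - k) powr (a - 1)
                   * (1 - real k * inverse (real n)) powr (a - 1)
                 = negbinom a (n - k) / real n powr (a - 1)) sequentially"
    using eventually_gt_at_top[of k]
  proof eventually_elim
    case (elim n)
    then have "1 - real k * inverse (real n) = real (n - k) / real n"
      by (simp add: field_simps)
    then show ?case using elim by (simp add: powr_divide)
  qed
  ultimately show ?thesis by (simp add: tendsto_cong)
qed

lemma power_le_fact_mult_exp:
  fixes y :: real
  assumes "0 \<le> y"
  shows "y ^ m \<le> fact m * exp y"
proof -
  have "y ^ m / fact m \<le> (\<Sum>n<Suc m. y ^ n / fact n)"
    using assms by (intro member_le_sum) auto
  also have "\<dots> \<le> (\<Sum>n. y ^ n / fact n)"
    using assms summable_exp[of y] by (intro sum_le_suminf) (auto simp: divide_inverse mult.commute)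
  also have "\<dots> = exp y"
    by (simp add: exp_def divide_inverse mult.commute)
  finally show ?thesis by (simp add: divide_simps mult.commute)
qed

definition nonneg_mat :: "real ^ 'n ^ 'm \<Rightarrow> bool" where
  "nonneg_mat M \<longleftrightarrow> (\<forall>i j. 0 \<le> M $ i $ j)"

lemma nonneg_mat_add: "nonneg_mat M \<Longrightarrow> nonneg_mat N \<Longrightarrow> nonneg_mat (M + N)"
  by (simp add: nonneg_mat_def)

lemma nonneg_mat_scaleR: "0 \<le> c \<Longrightarrow> nonneg_mat M \<Longrightarrow> nonneg_mat (c *\<^sub>R M)"
  by (simp add: nonneg_mat_def)

lemma nonneg_mat_sum: "(\<And>x. x \<in> S \<Longrightarrow> nonneg_mat (f x)) \<Longrightarrow> nonneg_mat (\<Sum>x\<in>S. f x)"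
  by (simp add: nonneg_mat_def sum_nonneg)

lemma nonneg_mat_mult: "nonneg_mat M \<Longrightarrow> nonneg_mat N \<Longrightarrow> nonneg_mat (M ** N)"
  by (simp add: nonneg_mat_def matrix_matrix_mult_def sum_nonneg)

lemma nonneg_mat_1: "nonneg_mat (mat 1 :: real ^ 'n ^ 'n)"
  by (simp add: nonneg_mat_def mat_def)

lemma matrix_add_rdistrib: "((B :: 'a :: semiring_1 ^ 'n ^ 'm) + C) ** D = B ** D + C ** D"
  by (vector matrix_matrix_mult_def sum.distrib[symmetric] distrib_right)

lemma matrix_mult_sum_right:
  fixes A :: "'a :: comm_ring_1 ^ 'n ^ 'm"
  shows "A ** (\<Sum>x\<in>S. f x) = (\<Sum>x\<in>S. A ** f x)"
  by (induction S rule: infinite_finite_induct) (simp_all add: matrix_add_ldistrib)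

lemma matpow_entry_bound:
  fixes A :: "real ^ 'n ^ 'n"
  shows "\<bar>matpow A k $ i $ j\<bar> \<le> (\<Sum>i\<in>UNIV. \<Sum>j\<in>UNIV. \<bar>A $ i $ j\<bar>) ^ k"
proof (induction k arbitrary: i j)
  case 0
  then show ?case by (simp add: mat_def)
next
  case (Suc k)
  define S where "S = (\<Sum>i\<in>UNIV. \<Sum>j\<in>UNIV. \<bar>A $ i $ j\<bar>)"
  have "\<bar>matpow A (Suc k) $ i $ j\<bar> \<le> (\<Sum>l\<in>UNIV. \<bar>A $ i $ l\<bar> * \<bar>matpow A k $ l $ j\<bar>)"
    by (simp add: matrix_matrix_mult_def sum_abs[THEN order_trans] abs_mult)
  also have "\<dots> \<le> (\<Sum>l\<in>UNIV. \<bar>A $ i $ l\<bar>) * S ^ k"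
    using Suc by (simp add: sum_distrib_right sum_mono mult_left_mono S_def)
  also have "\<dots> \<le> S * S ^ k"
    unfolding S_def
    by (intro mult_right_mono member_le_sum[of i UNIV "\<lambda>i. \<Sum>j\<in>UNIV. \<bar>A $ i $ j\<bar>"])
       (auto intro: sum_nonneg zero_le_power)
  finally show ?case by (simp add: S_def)
qed

lemma column_sum_matpow_Suc:
  fixes A :: "real ^ 'n ^ 'n"
  assumes "\<And>j. (\<Sum>i\<in>UNIV. A $ i $ j) = 0"
  shows "(\<Sum>i\<in>UNIV. matpow A (Suc k) $ i $ j) = 0"
proof -
  have "(\<Sum>i\<in>UNIV. matpow A (Suc k) $ i $ j) = (\<Sum>l\<in>UNIV. (\<Sum>i\<in>UNIV. A $ i $ l) * matpow A k $ l $ j)"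
    by (simp add: matrix_matrix_mult_def sum_distrib_right) (rule sum.swap)
  then show ?thesis using assms by simp
qed

lemma sum_triangle_swap:
  fixes f :: "nat \<Rightarrow> nat \<Rightarrow> 'a :: comm_monoid_add"
  shows "(\<Sum>j\<le>n. \<Sum>k\<le>n - j. f j k) = (\<Sum>k\<le>n. \<Sum>j\<le>n - k. f j k)"
proof -
  have "(\<Sum>j\<le>n. \<Sum>k\<le>n - j. f j k) = (\<Sum>j\<le>n. \<Sum>k\<in>{k \<in> {..n}. j + k \<le> n}. f j k)"
    by (intro sum.cong) auto
  also have "\<dots> = (\<Sum>k\<le>n. \<Sum>j\<in>{j \<in> {..n}. j + k \<le> n}. f j k)"
    by (rule sum.swap_restrict) auto
  also have "\<dots> = (\<Sum>k\<le>n. \<Sum>j\<le>n - k. f j k)"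
    by (intro sum.cong) auto
  finally show ?thesis .
qed

text \<open>The generating function of n \<mapsto> grunwald_approx \<alpha> u A n is
  (1 - z)^-1 (I - u z (1 - z)^-\<alpha> A)^-1.\<close>

definition grunwald_approx :: "real \<Rightarrow> real \<Rightarrow> real ^ 'n ^ 'n \<Rightarrow> nat \<Rightarrow> real ^ 'n ^ 'n" where
  "grunwald_approx \<alpha> u A n = (\<Sum>k\<le>n. (u ^ k * negbinom (1 + \<alpha> * real k) (n - k)) *\<^sub>R matpow A k)"

lemma grunwald_approx_0: "grunwald_approx \<alpha> u A 0 = mat 1"
  by (simp add: grunwald_approx_def)

lemma grunwald_approx_recurrence:
  "(\<Sum>j\<le>Suc m. negbinom (- \<alpha>) j *\<^sub>R grunwald_approx \<alpha> u A (Suc m - j))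
     = negbinom (1 - \<alpha>) (Suc m) *\<^sub>R mat 1 + u *\<^sub>R (A ** grunwald_approx \<alpha> u A m)"
proof -
  let ?c = "\<lambda>n k. u ^ k * negbinom (1 + \<alpha> * real k) (n - k)"
  define n where "n = Suc m"
  have "(\<Sum>j\<le>n. negbinom (- \<alpha>) j *\<^sub>R grunwald_approx \<alpha> u A (n - j))
      = (\<Sum>j\<le>n. \<Sum>k\<le>n - j. (negbinom (- \<alpha>) j * ?c (n - j) k) *\<^sub>R matpow A k)"
    by (simp add: grunwald_approx_def scaleR_sum_right)
  also have "\<dots> = (\<Sum>k\<le>n. \<Sum>j\<le>n - k. (negbinom (- \<alpha>) j * ?c (n - j) k) *\<^sub>R matpow A k)"
    by (rule sum_triangle_swap)
  also have "\<dots> = (\<Sum>k\<le>n. (u ^ k * negbinom (1 - \<alpha> + \<alpha> * real k) (n - k)) *\<^sub>R matpow A k)"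
  proof (rule sum.cong)
    fix k
    have "(\<Sum>j\<le>n - k. negbinom (- \<alpha>) j * ?c (n - j) k)
        = u ^ k * (\<Sum>j\<le>n - k. negbinom (- \<alpha>) j * negbinom (1 + \<alpha> * real k) (n - k - j))"
      by (simp add: sum_distrib_left mult_ac diff_commute add.commute)
    also have "\<dots> = u ^ k * negbinom (- \<alpha> + (1 + \<alpha> * real k)) (n - k)"
      by (simp only: negbinom_convolution)
    finally show "(\<Sum>j\<le>n - k. (negbinom (- \<alpha>) j * ?c (n - j) k) *\<^sub>R matpow A k)
        = (u ^ k * negbinom (1 - \<alpha> + \<alpha> * real k) (n - k)) *\<^sub>R matpow A k"
      by (simp add: scaleR_sum_left[symmetric] algebra_simps)
  qed simp
  also have "\<dots> = negbinom (1 - \<alpha>) n *\<^sub>R mat 1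
      + (\<Sum>k\<le>m. (u ^ Suc k * negbinom (1 + \<alpha> * real k) (m - k)) *\<^sub>R matpow A (Suc k))"
    unfolding n_def by (subst sum.atMost_Suc_shift) (simp add: algebra_simps)
  also have "(\<Sum>k\<le>m. (u ^ Suc k * negbinom (1 + \<alpha> * real k) (m - k)) *\<^sub>R matpow A (Suc k))
      = u *\<^sub>R (A ** grunwald_approx \<alpha> u A m)"
    by (simp add: grunwald_approx_def matrix_mult_sum_right scaleR_sum_right matrix_scalar_ac
        scalar_matrix_assoc[symmetric] mult.assoc)
  finally show ?thesis by (simp add: n_def)
qed

lemma grunwald_approx_nonneg:
  fixes A :: "real ^ 'n ^ 'n"
  assumes "nonneg_mat (u *\<^sub>R A + \<alpha> *\<^sub>R mat 1)" and "0 \<le> \<alpha>" "\<alpha> \<le> 1"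
  shows "nonneg_mat (grunwald_approx \<alpha> u A n)"
proof (induction n rule: less_induct)
  case (less n)
  show ?case
  proof (cases n)
    case 0
    then show ?thesis by (simp add: grunwald_approx_0 nonneg_mat_1)
  next
    case (Suc m)
    let ?Y = "grunwald_approx \<alpha> u A"
    have "{..Suc m} = {0, 1} \<union> {2..Suc m}" by auto
    then have "(\<Sum>j\<le>Suc m. negbinom (- \<alpha>) j *\<^sub>R ?Y (Suc m - j))
        = ?Y (Suc m) - \<alpha> *\<^sub>R ?Y m + (\<Sum>j\<in>{2..Suc m}. negbinom (- \<alpha>) j *\<^sub>R ?Y (Suc m - j))"
      by (simp add: sum.union_disjoint del: sum.cl_ivl_Suc)
    then have "?Y (Suc m) - \<alpha> *\<^sub>R ?Y m + (\<Sum>j\<in>{2..Suc m}. negbinom (- \<alpha>) j *\<^sub>R ?Y (Suc m - j))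
        = negbinom (1 - \<alpha>) (Suc m) *\<^sub>R mat 1 + u *\<^sub>R (A ** ?Y m)"
      using grunwald_approx_recurrence[of \<alpha> u A m] by simp
    then have recurrence: "?Y (Suc m) = negbinom (1 - \<alpha>) (Suc m) *\<^sub>R mat 1
        + (u *\<^sub>R A + \<alpha> *\<^sub>R mat 1) ** ?Y m
        + (\<Sum>j\<in>{2..Suc m}. (- negbinom (- \<alpha>) j) *\<^sub>R ?Y (Suc m - j))"
      by (simp add: algebra_simps sum_negf matrix_add_rdistrib scalar_matrix_assoc[symmetric]
          del: sum.cl_ivl_Suc)
    have "nonneg_mat (negbinom (1 - \<alpha>) (Suc m) *\<^sub>R mat 1)"
      using assms by (intro nonneg_mat_scaleR negbinom_nonneg nonneg_mat_1) auto
    moreover have "nonneg_mat ((u *\<^sub>R A + \<alpha> *\<^sub>R mat 1) ** ?Y m)"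
      using assms(1) less Suc by (intro nonneg_mat_mult) auto
    moreover have "nonneg_mat (\<Sum>j\<in>{2..Suc m}. (- negbinom (- \<alpha>) j) *\<^sub>R ?Y (Suc m - j))"
      using less Suc negbinom_neg_nonpos[OF assms(2,3)]
      by (intro nonneg_mat_sum nonneg_mat_scaleR) auto
    ultimately have "nonneg_mat (?Y (Suc m))"
      unfolding recurrence by (intro nonneg_mat_add)
    then show ?thesis using Suc by simp
  qed
qed

lemma eventually_div_powr_le:
  assumes "0 < \<alpha>" "0 < d"
  shows "eventually (\<lambda>N. c / real N powr \<alpha> \<le> d) sequentially"
proof -
  have "(\<lambda>N. c * real N powr (- \<alpha>)) \<longlonglongrightarrow> c * 0"
    using assms by (intro tendsto_mult tendsto_const tendsto_neg_powr filterlim_real_sequentially) auto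
  then have "eventually (\<lambda>N. c * real N powr (- \<alpha>) < d) sequentially"
    using assms by (intro order_tendstoD(2)) auto
  then show ?thesis
    by eventually_elim (simp add: powr_minus_divide)
qed

lemma grunwald_coeff_bound:
  assumes "0 \<le> \<alpha>" "0 \<le> t" "1 \<le> N0" "N0 \<le> N" "k \<le> N"
  shows "((t / real N) powr \<alpha>) ^ k * negbinom (1 + \<alpha> * real k) (N - k)
           \<le> fact N0 * exp 1 * (exp \<alpha> * t powr \<alpha> / real N0 powr \<alpha>) ^ k"
proof -
  define x where "x = \<alpha> * real k"
  have x: "0 \<le> x" using assms unfolding x_def by simp
  have N: "0 < real N" "0 < real N0" using assms by auto
  have "negbinom (1 + x) (N - k) \<le> negbinom (1 + x) N"
    using negbinom_mono[of "1 + x"] x by (simp add: incseq_def)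
  also have "\<dots> \<le> negbinom (1 + x) N0 * (real N / real N0) powr x"
    using negbinom_growth[of "1 + x" N0 N] x assms by simp
  also have "\<dots> \<le> fact N0 * exp (1 + x) * (real N / real N0) powr x"
    using negbinom_le_power[of "1 + x" N0] power_le_fact_mult_exp[of "1 + x" N0] x
    by (intro mult_right_mono) auto
  finally have "negbinom (1 + x) (N - k) / real N powr x \<le> fact N0 * exp (1 + x) / real N0 powr x"
    using N by (simp add: divide_simps powr_divide mult.commute)
  from mult_left_mono[OF this, of "(t powr \<alpha>) ^ k"] have
    "(t powr \<alpha>) ^ k * (negbinom (1 + x) (N - k) / real N powr x)
      \<le> (t powr \<alpha>) ^ k * (fact N0 * exp (1 + x) / real N0 powr x)"
    by simp
  moreover have "((t / real N) powr \<alpha>) ^ k = (t powr \<alpha>) ^ k / real N powr x"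
    using assms N by (simp add: x_def powr_divide power_divide powr_power mult.commute)
  ultimately have "((t / real N) powr \<alpha>) ^ k * negbinom (1 + x) (N - k)
      \<le> (t powr \<alpha>) ^ k * (fact N0 * exp (1 + x) / real N0 powr x)"
    by simp
  also have "\<dots> = fact N0 * exp 1 * (exp \<alpha> * t powr \<alpha> / real N0 powr \<alpha>) ^ k"
    using N exp_of_nat_mult[of k \<alpha>]
    by (simp add: x_def exp_add power_mult_distrib power_divide powr_power mult.commute)
  finally show ?thesis by (simp add: x_def)
qed

lemma grunwald_term_entry_bound:
  fixes A :: "real ^ 'n ^ 'n"
  assumes "0 \<le> \<alpha>" "0 \<le> t" "1 \<le> N0" "N0 \<le> N" "k \<le> N"
  shows "\<bar>((t / real N) powr \<alpha>) ^ k * negbinom (1 + \<alpha> * real k) (N - k) * matpow A k $ i $ j\<bar>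
    \<le> fact N0 * exp 1
        * (exp \<alpha> * t powr \<alpha> * (\<Sum>i\<in>UNIV. \<Sum>j\<in>UNIV. \<bar>A $ i $ j\<bar>) / real N0 powr \<alpha>) ^ k"
proof -
  let ?S = "\<Sum>i\<in>UNIV. \<Sum>j\<in>UNIV. \<bar>A $ i $ j\<bar>"
  have "\<bar>((t / real N) powr \<alpha>) ^ k * negbinom (1 + \<alpha> * real k) (N - k) * matpow A k $ i $ j\<bar>
      \<le> fact N0 * exp 1 * (exp \<alpha> * t powr \<alpha> / real N0 powr \<alpha>) ^ k * ?S ^ k"
    using mult_mono[OF grunwald_coeff_bound[OF assms] matpow_entry_bound[of A k i j]]
      negbinom_nonneg[of "1 + \<alpha> * real k" "N - k"] assms
    by (simp add: abs_mult)
  also have "\<dots> = fact N0 * exp 1 * (exp \<alpha> * t powr \<alpha> * ?S / real N0 powr \<alpha>) ^ k"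
    by (simp add: power_mult_distrib power_divide)
  finally show ?thesis .
qed

lemma grunwald_coeff_tendsto:
  assumes "0 \<le> \<alpha>" "0 \<le> t"
  shows "(\<lambda>N. ((t / real N) powr \<alpha>) ^ k * negbinom (1 + \<alpha> * real k) (N - k))
           \<longlonglongrightarrow> (t powr \<alpha>) ^ k / Gamma (\<alpha> * real k + 1)"
proof -
  have "(\<lambda>N. (t powr \<alpha>) ^ k * (negbinom (1 + \<alpha> * real k) (N - k) / real N powr (\<alpha> * real k)))
          \<longlonglongrightarrow> (t powr \<alpha>) ^ k * inverse (Gamma (1 + \<alpha> * real k))"
  proof (intro tendsto_mult tendsto_const)
    have "0 < 1 + \<alpha> * real k" using assms by (intro add_pos_nonneg) auto
    from negbinom_shifted_asymptotics[OF this, of k]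
    show "(\<lambda>N. negbinom (1 + \<alpha> * real k) (N - k) / real N powr (\<alpha> * real k))
            \<longlonglongrightarrow> inverse (Gamma (1 + \<alpha> * real k))"
      by simp
  qed
  moreover have "eventually (\<lambda>N. (t powr \<alpha>) ^ k * (negbinom (1 + \<alpha> * real k) (N - k)
                   / real N powr (\<alpha> * real k))
                 = ((t / real N) powr \<alpha>) ^ k * negbinom (1 + \<alpha> * real k) (N - k)) sequentially"
    using eventually_gt_at_top[of 0]
    by eventually_elim (use assms in \<open>simp add: powr_divide power_divide powr_power mult.commute\<close>)
  ultimately have "(\<lambda>N. ((t / real N) powr \<alpha>) ^ k * negbinom (1 + \<alpha> * real k) (N - k))
      \<longlonglongrightarrow> (t powr \<alpha>) ^ k * inverse (Gamma (1 + \<alpha> * real k))"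
    by (rule Lim_transform_eventually)
  then show ?thesis
    by (simp add: divide_inverse add.commute)
qed

lemma grunwald_approx_entry_tendsto:
  fixes A :: "real ^ 'n ^ 'n"
  assumes "0 < \<alpha>" "0 \<le> t"
  shows "summable (\<lambda>k. \<bar>mittag_term \<alpha> A t k $ i $ j\<bar>)"
    and "(\<lambda>N. grunwald_approx \<alpha> ((t / real N) powr \<alpha>) A N $ i $ j)
           \<longlonglongrightarrow> (\<Sum>k. mittag_term \<alpha> A t k $ i $ j)"
proof -
  define S where "S = (\<Sum>i\<in>UNIV. \<Sum>j\<in>UNIV. \<bar>A $ i $ j\<bar>)"
  define c where "c N k = ((t / real N) powr \<alpha>) ^ k * negbinom (1 + \<alpha> * real k) (N - k)" for N k
  define a where "a k N = (if k \<le> N then c N k * matpow A k $ i $ j else 0)" for k N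
  have S: "0 \<le> S" unfolding S_def by (intro sum_nonneg) auto
  have "eventually (\<lambda>N. 1 \<le> N \<and> exp \<alpha> * t powr \<alpha> * S / real N powr \<alpha> \<le> 1 / 2) sequentially"
    using assms by (intro eventually_conj eventually_ge_at_top eventually_div_powr_le) auto
  then obtain N0 where N0: "N0 \<ge> 1" "exp \<alpha> * t powr \<alpha> * S / real N0 powr \<alpha> \<le> 1 / 2"
    unfolding eventually_sequentially by blast
  have "(\<lambda>N. a k N) \<longlonglongrightarrow> mittag_term \<alpha> A t k $ i $ j" for k
  proof -
    have "(\<lambda>N. c N k * matpow A k $ i $ j)
            \<longlonglongrightarrow> (t powr \<alpha>) ^ k / Gamma (\<alpha> * real k + 1) * matpow A k $ i $ j"
      unfolding c_def using grunwald_coeff_tendsto[of \<alpha> t k] assms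
      by (intro tendsto_mult_right) auto
    then have "(\<lambda>N. c N k * matpow A k $ i $ j) \<longlonglongrightarrow> mittag_term \<alpha> A t k $ i $ j"
      by (simp add: mittag_term_def)
    moreover have "eventually (\<lambda>N. c N k * matpow A k $ i $ j = a k N) sequentially"
      using eventually_ge_at_top[of k] by eventually_elim (simp add: a_def)
    ultimately show ?thesis by (rule Lim_transform_eventually)
  qed
  moreover have "norm (a k N) \<le> fact N0 * exp 1 * (1 / 2) ^ k" if "N0 \<le> N" for k N
  proof -
    have "(exp \<alpha> * t powr \<alpha> * S / real N0 powr \<alpha>) ^ k \<le> (1 / 2) ^ k"
      using N0 S assms by (intro power_mono) auto
    then show ?thesis
      using grunwald_term_entry_bound[of \<alpha> t N0 N k A i j] that N0 assms
      by (auto simp: a_def c_def S_def intro: order_trans)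
  qed
  then have "eventually (\<lambda>(k, N). norm (a k N) \<le> fact N0 * exp 1 * (1 / 2) ^ k)
               (at_top \<times>\<^sub>F sequentially)"
    unfolding eventually_prod_filter
    by (intro exI[of _ "\<lambda>_. True"] exI[of _ "\<lambda>N. N0 \<le> N"]) (auto intro: eventually_ge_at_top)
  ultimately have tannery: "summable (\<lambda>k. norm (mittag_term \<alpha> A t k $ i $ j))"
    "(\<lambda>N. \<Sum>k. a k N) \<longlonglongrightarrow> (\<Sum>k. mittag_term \<alpha> A t k $ i $ j)"
    using tannerys_theorem[of a _ sequentially "\<lambda>k. fact N0 * exp 1 * (1 / 2) ^ k"] by auto
  have "(\<Sum>k. a k N) = grunwald_approx \<alpha> ((t / real N) powr \<alpha>) A N $ i $ j" for N
    by (subst suminf_finite[of "{..N}"]) (auto simp: a_def c_def grunwald_approx_def)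
  with tannery show "summable (\<lambda>k. \<bar>mittag_term \<alpha> A t k $ i $ j\<bar>)"
    and "(\<lambda>N. grunwald_approx \<alpha> ((t / real N) powr \<alpha>) A N $ i $ j)
           \<longlonglongrightarrow> (\<Sum>k. mittag_term \<alpha> A t k $ i $ j)"
    by simp_all
qed

lemma sums_vecI:
  fixes f :: "nat \<Rightarrow> 'a :: real_normed_vector ^ 'n"
  assumes "\<And>i. (\<lambda>k. f k $ i) sums s $ i"
  shows "f sums s"
  using assms unfolding sums_def by (intro vec_tendstoI) simp

lemma nonneg_mat_shifted_metzler:
  fixes A :: "real ^ 'n ^ 'n"
  assumes "\<And>i j. i \<noteq> j \<Longrightarrow> 0 \<le> A $ i $ j" "0 \<le> u" "\<And>j. - (u * A $ j $ j) \<le> \<alpha>"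
  shows "nonneg_mat (u *\<^sub>R A + \<alpha> *\<^sub>R mat 1)"
  unfolding nonneg_mat_def
proof (intro allI)
  fix i j
  show "0 \<le> (u *\<^sub>R A + \<alpha> *\<^sub>R mat 1) $ i $ j"
    using assms(1)[of i j] assms(2) assms(3)[of i] by (cases "i = j") (auto simp: mat_def)
qed

lemma mittag_term_entry_sum_nonneg:
  fixes A :: "real ^ 'n ^ 'n"
  assumes "\<And>i j. i \<noteq> j \<Longrightarrow> 0 \<le> A $ i $ j"
    and "0 < \<alpha>" "\<alpha> \<le> 1" "0 \<le> t"
  shows "0 \<le> (\<Sum>k. mittag_term \<alpha> A t k $ i $ j)"
proof (rule tendsto_lowerbound[OF grunwald_approx_entry_tendsto(2)])
  define S where "S = (\<Sum>i\<in>UNIV. \<Sum>j\<in>UNIV. \<bar>A $ i $ j\<bar>)"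
  have diag: "- A $ l $ l \<le> S" for l
  proof -
    have "- A $ l $ l \<le> (\<Sum>j\<in>UNIV. \<bar>A $ l $ j\<bar>)"
      using member_le_sum[of l UNIV "\<lambda>j. \<bar>A $ l $ j\<bar>"] by simp
    also have "\<dots> \<le> S"
      unfolding S_def by (rule member_le_sum) (auto intro: sum_nonneg)
    finally show ?thesis .
  qed
  show "eventually (\<lambda>N. 0 \<le> grunwald_approx \<alpha> ((t / real N) powr \<alpha>) A N $ i $ j) sequentially"
    using eventually_div_powr_le[OF assms(2) assms(2), of "t powr \<alpha> * S"]
  proof eventually_elim
    case (elim N)
    define u where "u = (t / real N) powr \<alpha>"
    have "- (u * A $ l $ l) \<le> \<alpha>" for l
    proof -
      have "- (u * A $ l $ l) \<le> u * S"
        using mult_left_mono[OF diag[of l], of u] by (simp add: u_def)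
      also have "\<dots> = t powr \<alpha> * S / real N powr \<alpha>"
        using \<open>0 \<le> t\<close> by (simp add: u_def powr_divide)
      finally show ?thesis using elim by linarith
    qed
    then have "nonneg_mat (grunwald_approx \<alpha> u A N)"
      using assms by (intro grunwald_approx_nonneg nonneg_mat_shifted_metzler) (auto simp: u_def)
    then show ?case by (simp add: nonneg_mat_def u_def)
  qed
qed (use assms in auto)

lemma column_sum_mittag_term:
  fixes A :: "real ^ 'n ^ 'n"
  assumes "\<And>j. (\<Sum>i\<in>UNIV. A $ i $ j) = 0"
  shows "(\<Sum>i\<in>UNIV. mittag_term \<alpha> A t k $ i $ j) = (if k = 0 then 1 else 0)"
proof (cases k)
  case (Suc m)
  have "(\<Sum>i\<in>UNIV. mittag_term \<alpha> A t k $ i $ j)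
      = (t powr \<alpha>) ^ k / Gamma (\<alpha> * real k + 1) * (\<Sum>i\<in>UNIV. matpow A k $ i $ j)"
    by (simp add: mittag_term_def sum_distrib_left del: matpow.simps)
  then show ?thesis
    using column_sum_matpow_Suc[OF assms, of m j] Suc by simp
qed (simp add: mittag_term_def mat_def)

theorem mainTheorem6:
  fixes A :: "real ^ 'n ^ 'n" and \<alpha> t :: real
  assumes offdiag: "\<And>i j. i \<noteq> j \<Longrightarrow> A $ i $ j \<ge> 0"
    and diag: "\<And>j. A $ j $ j = - (\<Sum>i\<in>UNIV - {j}. A $ i $ j)"
    and alpha: "0 < \<alpha>" "\<alpha> \<le> 1"
    and t: "t \<ge> 0"
  shows "summable (mittag_term \<alpha> A t)
    \<and> (\<forall>i j. mittag_leffler_mat \<alpha> A t $ i $ j \<ge> 0)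
    \<and> (\<forall>j. (\<Sum>i\<in>UNIV. mittag_leffler_mat \<alpha> A t $ i $ j) = 1)"
proof -
  let ?E = "\<chi> i j. \<Sum>k. mittag_term \<alpha> A t k $ i $ j"
  have entry_summable: "summable (\<lambda>k. mittag_term \<alpha> A t k $ i $ j)" for i j
    using grunwald_approx_entry_tendsto(1)[OF alpha(1) t] by (rule summable_rabs_cancel)
  then have "mittag_term \<alpha> A t sums ?E"
    by (intro sums_vecI) (simp add: summable_sums)
  then have series_summable: "summable (mittag_term \<alpha> A t)" and E: "mittag_leffler_mat \<alpha> A t = ?E"
    by (auto simp: sums_iff mittag_leffler_mat_def)
  have "(\<Sum>i\<in>UNIV. A $ i $ j) = 0" for j
    using diag[of j] sum.remove[of UNIV j "\<lambda>i. A $ i $ j"] by simp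
  then have "(\<Sum>i\<in>UNIV. ?E $ i $ j) = 1" for j
    using entry_summable suminf_finite[of "{0}" "\<lambda>k. if k = 0 then 1 else 0 :: real"]
    by (simp add: suminf_sum[symmetric] column_sum_mittag_term)
  then show ?thesis
    using series_summable mittag_term_entry_sum_nonneg[OF offdiag alpha t] by (simp add: E)
qed

end
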